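(* (Explicit Rayleigh's Shorting Law.) Let $\Gamma$ be a metrized graph and let $p,q,s,t\in\Gamma$ with $p\neq q$. Then $$r(s,t)=r_{\Gamma_{pq}}(s,t)+\frac{1}{r(p,q)}\big[j_p(q,s)-j_p(q,t)\big]^2 .$$ In particular $r(s,t)\ge r_{\Gamma_{pq}}(s,t)$, and equality holds if and only if $j_p(q,s)=j_p(q,t)$.
   Context: A metrized graph $\Gamma$ is a finite connected graph (multiple edges and self-loops allowed) in which each edge is identified with a closed line segment of positive length; any finite set of points may be declared vertices. $\Gamma$ is regarded as a resistive electric circuit in which each edge is a resistor whose resistance equals its length. For $x,y\in\Gamma$, $r(x,y)$ is the effective resistance between $x$ and $y$. For $x,y,z\in\Gamma$, $j_z(x,y)$ is the voltage at $x$ when a unit current enters the circuit at $y$ and exits at $z$, with reference voltage $0$ at $z$ (so $j_x(y,y)=r(x,y)$). For $p,q\in\Gamma$, $\Gamma_{pq}$ denotes the metrized graph obtained from $\Gamma$ by identifying the points $p$ and $q$; $r_{\Gamma_{pq}}$ and $j^{\Gamma_{pq}}$ denote the resistance and voltage functions on $\Gamma_{pq}$ (points of $\Gamma$ are regarded as points of $\Gamma_{pq}$ via the quotient map). *)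

theory Defs
  imports Complex_Main
begin

text \<open>A metrized graph is modelled by a finite connected multigraph (self-loops and
multiple edges allowed): vertex set V, edge set E, endpoint map ends and
edge lengths len (= resistances).  Points of interest are declared vertices
(any finite set of points of a metrized graph may be declared vertices).\<close>

definition adjacent :: "'e set \<Rightarrow> ('e \<Rightarrow> 'a \<times> 'a) \<Rightarrow> 'a \<Rightarrow> 'a \<Rightarrow> bool" where
  "adjacent E ends a b \<longleftrightarrow> (\<exists>e\<in>E. ends e = (a, b) \<or> ends e = (b, a))"

definition metrized_graph ::
  "'a set \<Rightarrow> 'e set \<Rightarrow> ('e \<Rightarrow> 'a \<times> 'a) \<Rightarrow> ('e \<Rightarrow> real) \<Rightarrow> bool" where
  "metrized_graph V E ends len \<longleftrightarrow>
     finite V \<and> V \<noteq> {} \<and> finite E \<and>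
     (\<forall>e\<in>E. fst (ends e) \<in> V \<and> snd (ends e) \<in> V \<and> len e > 0) \<and>
     (\<forall>a\<in>V. \<forall>b\<in>V. (adjacent E ends)\<^sup>*\<^sup>* a b)"

definition outflow ::
  "'e set \<Rightarrow> ('e \<Rightarrow> 'a \<times> 'a) \<Rightarrow> ('e \<Rightarrow> real) \<Rightarrow> ('a \<Rightarrow> real) \<Rightarrow> 'a \<Rightarrow> real" where
  "outflow E ends len v w =
     (\<Sum>e\<in>E. (if fst (ends e) = w then (v w - v (snd (ends e))) / len e else 0)
            + (if snd (ends e) = w then (v w - v (fst (ends e))) / len e else 0))"

text \<open>v is the potential when a unit current enters at y and exits at z,
with reference potential 0 at z (normalised to 0 outside V).\<close>
definition is_voltage ::
  "'a set \<Rightarrow> 'e set \<Rightarrow> ('e \<Rightarrow> 'a \<times> 'a) \<Rightarrow> ('e \<Rightarrow> real) \<Rightarrow> 'a \<Rightarrow> 'a \<Rightarrow> ('a \<Rightarrow> real) \<Rightarrow> bool" where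
  "is_voltage V E ends len z y v \<longleftrightarrow>
     v z = 0 \<and> (\<forall>w. w \<notin> V \<longrightarrow> v w = 0) \<and>
     (\<forall>w\<in>V. outflow E ends len v w = (if w = y then 1 else 0) - (if w = z then 1 else 0))"

text \<open>jv V E ends len z x y = j_z(x,y): voltage at x, unit current in at y, out at z.\<close>
definition jv ::
  "'a set \<Rightarrow> 'e set \<Rightarrow> ('e \<Rightarrow> 'a \<times> 'a) \<Rightarrow> ('e \<Rightarrow> real) \<Rightarrow> 'a \<Rightarrow> 'a \<Rightarrow> 'a \<Rightarrow> real" where
  "jv V E ends len z x y = (THE v. is_voltage V E ends len z y v) x"

definition eff_res ::
  "'a set \<Rightarrow> 'e set \<Rightarrow> ('e \<Rightarrow> 'a \<times> 'a) \<Rightarrow> ('e \<Rightarrow> real) \<Rightarrow> 'a \<Rightarrow> 'a \<Rightarrow> real" where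
  "eff_res V E ends len x y = jv V E ends len x y y"

definition ident :: "'a \<Rightarrow> 'a \<Rightarrow> 'a \<Rightarrow> 'a" where
  "ident p q w = (if w = q then p else w)"

definition glue_V :: "'a set \<Rightarrow> 'a \<Rightarrow> 'a \<Rightarrow> 'a set" where
  "glue_V V p q = ident p q ` V"

definition glue_ends :: "('e \<Rightarrow> 'a \<times> 'a) \<Rightarrow> 'a \<Rightarrow> 'a \<Rightarrow> 'e \<Rightarrow> 'a \<times> 'a" where
  "glue_ends ends p q e = map_prod (ident p q) (ident p q) (ends e)"

end

theory Submission
  imports Defs
begin

text \<open>Let \<open>\<phi>\<close> and \<open>\<psi>\<close> be the potentials of unit currents from \<open>t\<close> to \<open>s\<close> and from
\<open>q\<close> to \<open>p\<close>, grounded at \<open>s\<close> and \<open>p\<close>. With \<open>c = (\<phi> q - \<phi> p) / r(p,q)\<close> the potential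
\<open>u = \<phi> - c \<psi>\<close> takes the same value at \<open>p\<close> and \<open>q\<close>, so it descends to \<open>\<Gamma>\<^sub>p\<^sub>q\<close>,
where the extra current \<open>c\<close> between \<open>p\<close> and \<open>q\<close> cancels: \<open>u\<close> is the \<open>s\<close>-\<open>t\<close>
potential of \<open>\<Gamma>\<^sub>p\<^sub>q\<close>, hence \<open>r(s,t) - r\<^sub>p\<^sub>q(s,t) = c (\<psi> t - \<psi> s)\<close>. The
reciprocity law \<open>\<phi> q - \<phi> p = \<psi> t - \<psi> s\<close>, a consequence of Green's identity, turns
this into the square. Potentials are unique because a function of zero energy is constant on a
connected graph; the same fact gives existence, via a square linear system with trivial kernel.\<close>

lemma outflow_linear:
  "outflow E ends len (\<lambda>x. a * f x + g x) w = a * outflow E ends len f w + outflow E ends len g w"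
  unfolding outflow_def sum_distrib_left sum.distrib[symmetric]
  by (intro sum.cong) (auto simp: algebra_simps diff_divide_distrib add_divide_distrib)

lemma outflow_diff:
  "outflow E ends len (\<lambda>x. f x - c * g x) w = outflow E ends len f w - c * outflow E ends len g w"
  using outflow_linear[of E ends len "-c" g f w] by (simp add: algebra_simps)

lemma outflow_diff_const: "outflow E ends len (\<lambda>x. f x - k) w = outflow E ends len f w"
  unfolding outflow_def by (intro sum.cong) auto

lemma outflow_const: "outflow E ends len (\<lambda>_. k) w = 0"
  unfolding outflow_def by (intro sum.neutral) simp

lemma outflow_sum:
  "finite S \<Longrightarrow> outflow E ends len (\<lambda>x. \<Sum>u\<in>S. c u * g u x) w
     = (\<Sum>u\<in>S. c u * outflow E ends len (g u) w)"
proof (induction S rule: finite_induct)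
  case empty
  show ?case unfolding outflow_def sum.empty by (intro sum.neutral) simp
next
  case (insert a S)
  then show ?case using outflow_linear[of E ends len "c a" "g a" "\<lambda>x. \<Sum>u\<in>S. c u * g u x" w] by simp
qed

lemma outflow_glue_ends_off:
  assumes "w \<noteq> p" "w \<noteq> q"
  shows "outflow E (glue_ends ends p q) len g w = outflow E ends len (g \<circ> ident p q) w"
  using assms unfolding outflow_def glue_ends_def by (intro sum.cong) (auto simp: ident_def)

lemma outflow_glue_ends_at:
  assumes "p \<noteq> q"
  shows "outflow E (glue_ends ends p q) len g p
           = outflow E ends len (g \<circ> ident p q) p + outflow E ends len (g \<circ> ident p q) q"
  using assms unfolding outflow_def glue_ends_def sum.distrib[symmetric]
  by (intro sum.cong) (auto simp: ident_def diff_divide_distrib)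

lemma pivot_elimination:
  fixes K :: "'r \<Rightarrow> 'c \<Rightarrow> real"
  assumes "finite C" "a \<notin> C" "K b a \<noteq> 0"
  shows "(\<Sum>u\<in>insert a C. K w u * (v(a := (y - (\<Sum>u\<in>C. K b u * v u)) / K b a)) u)
           = K w a * y / K b a + (\<Sum>u\<in>C. (K w u - K w a * K b u / K b a) * v u)"
proof -
  have "(\<Sum>u\<in>C. K w u * (v(a := x)) u) = (\<Sum>u\<in>C. K w u * v u)" for x
    using assms(2) by (intro sum.cong) auto
  then show ?thesis
    using assms by (simp add: algebra_simps sum_subtractf sum_distrib_left sum_divide_distrib diff_divide_distrib)
qed

lemma injective_system_column_nonzero:
  fixes K :: "'r \<Rightarrow> 'c \<Rightarrow> real"
  assumes "finite C" "a \<in> C"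
    and "\<And>v. \<forall>w\<in>R. (\<Sum>u\<in>C. K w u * v u) = 0 \<Longrightarrow> \<forall>u\<in>C. v u = 0"
  shows "\<exists>b\<in>R. K b a \<noteq> 0"
proof (rule ccontr)
  assume "\<not> (\<exists>b\<in>R. K b a \<noteq> 0)"
  moreover have "(\<Sum>u\<in>C. K w u * (if u = a then 1 else 0)) = K w a" for w
    using assms(1,2) by (simp add: if_distrib[of "(*) _"] cong: if_cong)
  ultimately have "\<forall>u\<in>C. (if u = a then 1 else 0 :: real) = 0" by (intro assms(3)) auto
  then show False using assms(2) by auto
qed

lemma square_system_solvable:
  fixes K :: "'r \<Rightarrow> 'c \<Rightarrow> real"
  assumes "finite R" "finite C" "card R = card C"
    and "\<And>v. \<forall>w\<in>R. (\<Sum>u\<in>C. K w u * v u) = 0 \<Longrightarrow> \<forall>u\<in>C. v u = 0"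
  shows "\<exists>v. \<forall>w\<in>R. (\<Sum>u\<in>C. K w u * v u) = f w"
  using assms
proof (induction "card C" arbitrary: R C K f)
  case 0
  then show ?case by simp
next
  case (Suc n)
  obtain a C' where C: "C = insert a C'" "a \<notin> C'" "card C' = n"
    using card_Suc_eq[THEN iffD1, OF Suc.hyps(2)[symmetric]] by blast
  have "finite C'" using Suc.prems(2) C(1) by simp
  obtain b where b: "b \<in> R" "K b a \<noteq> 0"
    using injective_system_column_nonzero[of C a R K] Suc.prems(2,4) C(1) by blast
  \<comment> \<open>Gaussian elimination: row \<open>b\<close> determines the unknown \<open>a\<close>, leaving the system \<open>K'\<close>.\<close>
  define K' where "K' w u = K w u - K w a * K b u / K b a" for w u
  let ?extend = "\<lambda>v y. v(a := (y - (\<Sum>u\<in>C'. K b u * v u)) / K b a)"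
  have extend: "(\<Sum>u\<in>C. K w u * ?extend v y u) = K w a * y / K b a + (\<Sum>u\<in>C'. K' w u * v u)"
    for w v y
    unfolding C K'_def using pivot_elimination[of C' a K b, OF \<open>finite C'\<close> C(2) b(2)] by simp
  have extend_pivot: "(\<Sum>u\<in>C. K b u * ?extend v y u) = y" for v y
    using extend[of b] b(2) by (simp add: K'_def)
  have "\<exists>v. \<forall>w\<in>R - {b}. (\<Sum>u\<in>C'. K' w u * v u) = f w - K w a * f b / K b a"
  proof (rule Suc.hyps(1))
    show "card (R - {b}) = card C'" using Suc.prems(1,3) b(1) C \<open>finite C'\<close> by simp
  next
    fix v assume ker: "\<forall>w\<in>R - {b}. (\<Sum>u\<in>C'. K' w u * v u) = 0"
    have "(\<Sum>u\<in>C. K w u * ?extend v 0 u) = 0" if "w \<in> R" for w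
      using ker extend_pivot[of v 0] extend[of w v 0] that by (cases "w = b") auto
    then have "\<forall>u\<in>C. ?extend v 0 u = 0" by (intro Suc.prems(4)) blast
    then show "\<forall>u\<in>C'. v u = 0" using C(1,2) by (metis fun_upd_other insertCI)
  qed (use Suc.prems(1) C \<open>finite C'\<close> in simp_all)
  then obtain v where v: "\<forall>w\<in>R - {b}. (\<Sum>u\<in>C'. K' w u * v u) = f w - K w a * f b / K b a" ..
  have "(\<Sum>u\<in>C. K w u * ?extend v (f b) u) = f w" if "w \<in> R" for w
    using v extend_pivot[of v "f b"] extend[of w v "f b"] that by (cases "w = b") auto
  then show ?case by blast
qed

lemma ident_in_glue_V: "x \<in> V \<Longrightarrow> ident p q x \<in> glue_V V p q"
  by (simp add: glue_V_def)

lemma adjacent_glue_ends: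
  "adjacent E ends x y \<Longrightarrow> adjacent E (glue_ends ends p q) (ident p q x) (ident p q y)"
  unfolding adjacent_def glue_ends_def by force

lemma metrized_graph_glue:
  assumes "metrized_graph V E ends len"
  shows "metrized_graph (glue_V V p q) E (glue_ends ends p q) len"
  unfolding metrized_graph_def
proof (intro conjI ballI)
  fix a b assume "a \<in> glue_V V p q" "b \<in> glue_V V p q"
  then obtain x y where xy: "x \<in> V" "y \<in> V" "a = ident p q x" "b = ident p q y"
    by (auto simp: glue_V_def)
  have "(adjacent E ends)\<^sup>*\<^sup>* x y" using assms xy(1,2) by (simp add: metrized_graph_def)
  then have "(adjacent E (glue_ends ends p q))\<^sup>*\<^sup>* (ident p q x) (ident p q y)"
    by (induction rule: rtranclp_induct) (auto intro: rtranclp.rtrancl_into_rtrancl adjacent_glue_ends)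
  then show "(adjacent E (glue_ends ends p q))\<^sup>*\<^sup>* a b" using xy(3,4) by simp
qed (use assms in \<open>auto simp: metrized_graph_def glue_V_def glue_ends_def\<close>)

locale resistor_network =
  fixes V :: "'a set" and E :: "'e set" and ends :: "'e \<Rightarrow> 'a \<times> 'a" and len :: "'e \<Rightarrow> real"
  assumes metrized_graph: "metrized_graph V E ends len"
begin

abbreviation L :: "('a \<Rightarrow> real) \<Rightarrow> 'a \<Rightarrow> real" where
  "L \<equiv> outflow E ends len"

lemma finite_V: "finite V" and finite_E: "finite E"
  and ends_in_V: "e \<in> E \<Longrightarrow> fst (ends e) \<in> V" "e \<in> E \<Longrightarrow> snd (ends e) \<in> V"
  and len_pos: "e \<in> E \<Longrightarrow> len e > 0"
  and connected: "x \<in> V \<Longrightarrow> y \<in> V \<Longrightarrow> (adjacent E ends)\<^sup>*\<^sup>* x y"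
  using metrized_graph by (auto simp: metrized_graph_def)

lemma outflow_cong: "(\<And>x. x \<in> V \<Longrightarrow> f x = g x) \<Longrightarrow> w \<in> V \<Longrightarrow> L f w = L g w"
  unfolding outflow_def using ends_in_V by (intro sum.cong) auto

lemma green_identity:
  "(\<Sum>w\<in>V. u w * L v w)
     = (\<Sum>e\<in>E. (u (fst (ends e)) - u (snd (ends e))) * (v (fst (ends e)) - v (snd (ends e))) / len e)"
proof -
  have edge: "(\<Sum>w\<in>V. u w * ((if a = w then (v w - v b) / l else 0) + (if b = w then (v w - v a) / l else 0)))
      = (u a - u b) * (v a - v b) / l" if "a \<in> V" "b \<in> V" for a b and l :: real
    using that finite_V
    by (simp add: distrib_left sum.distrib if_distrib[of "(*) _"] cong: if_cong)
      (simp add: algebra_simps diff_divide_distrib add_divide_distrib)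
  have "(\<Sum>w\<in>V. u w * L v w) = (\<Sum>e\<in>E. \<Sum>w\<in>V. u w *
          ((if fst (ends e) = w then (v w - v (snd (ends e))) / len e else 0)
           + (if snd (ends e) = w then (v w - v (fst (ends e))) / len e else 0)))"
    unfolding outflow_def by (simp add: sum_distrib_left sum.swap[of _ E V])
  then show ?thesis using edge ends_in_V by simp
qed

lemma sum_outflow_eq_0: "(\<Sum>w\<in>V. L v w) = 0"
  using green_identity[of "\<lambda>_. 1" v] by simp

lemma energy_nonneg: "(\<Sum>w\<in>V. v w * L v w) \<ge> 0"
  unfolding green_identity by (intro sum_nonneg divide_nonneg_pos len_pos) simp_all

lemma energy_eq_0_imp_constant:
  assumes "(\<Sum>w\<in>V. v w * L v w) = 0" "x \<in> V" "y \<in> V"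
  shows "v x = v y"
proof -
  have "\<forall>e\<in>E. (v (fst (ends e)) - v (snd (ends e))) * (v (fst (ends e)) - v (snd (ends e))) / len e = 0"
    using assms(1) len_pos unfolding green_identity
    by (subst (asm) sum_nonneg_eq_0_iff[OF finite_E]) (auto intro!: divide_nonneg_pos)
  then have edge: "adjacent E ends a b \<Longrightarrow> v a = v b" for a b
    using len_pos unfolding adjacent_def by fastforce
  have "(adjacent E ends)\<^sup>*\<^sup>* x y" using connected assms(2,3) .
  then show ?thesis by (induction rule: rtranclp_induct) (auto dest: edge)
qed

lemma grounded_harmonic_eq_0:
  assumes "z \<in> V" "v z = 0" "\<And>w. w \<in> V - {z} \<Longrightarrow> L v w = 0" "x \<in> V"
  shows "v x = 0"
proof -
  have "L v z = 0"
    using sum_outflow_eq_0[of v] sum.remove[OF finite_V assms(1), of "L v"] assms(3) by simp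
  then have "(\<Sum>w\<in>V. v w * L v w) = 0" using assms(3) by (intro sum.neutral) auto
  then show ?thesis using energy_eq_0_imp_constant assms(1,2,4) by metis
qed

lemma voltage_unique:
  assumes "z \<in> V" "is_voltage V E ends len z y f" "is_voltage V E ends len z y g"
  shows "f = g"
proof
  fix x
  have "f x - g x = 0" if "x \<in> V"
    by (rule grounded_harmonic_eq_0[of z])
      (use assms that in \<open>simp_all add: outflow_diff[of E ends len f 1 g, simplified] is_voltage_def\<close>)
  then show "f x = g x" using assms by (cases "x \<in> V") (auto simp: is_voltage_def)
qed

lemma outflow_eq_sum_unit:
  assumes "w \<in> V"
  shows "L v w = (\<Sum>u\<in>V. v u * L (\<lambda>x. if x = u then 1 else 0) w)"
proof -
  have "L v w = L (\<lambda>x. \<Sum>u\<in>V. v u * (if x = u then 1 else 0)) w"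
    using assms finite_V by (intro outflow_cong) (simp_all add: if_distrib[of "(*) _"] cong: if_cong)
  also have "\<dots> = (\<Sum>u\<in>V. v u * L (\<lambda>x. if x = u then 1 else 0) w)"
    by (rule outflow_sum[OF finite_V])
  finally show ?thesis .
qed

lemma is_voltageI_off_ground:
  assumes "z \<in> V" "y \<in> V" "v z = 0" "\<And>w. w \<notin> V \<Longrightarrow> v w = 0"
    and "\<And>w. w \<in> V - {z} \<Longrightarrow> L v w = (if w = y then 1 else 0)"
  shows "is_voltage V E ends len z y v"
proof -
  have "L v z = - (\<Sum>w\<in>V - {z}. L v w)"
    using sum_outflow_eq_0[of v] sum.remove[OF finite_V assms(1), of "L v"] by simp
  also have "\<dots> = (if z = y then 0 else - 1)"
    using assms(2,5) finite_V by (simp add: sum.delta')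
  finally show ?thesis using assms unfolding is_voltage_def by auto
qed

lemma voltage_exists:
  assumes "z \<in> V" "y \<in> V"
  shows "\<exists>v. is_voltage V E ends len z y v"
proof -
  define K where "K w u = (if w = z then (if u = z then 1 else 0) else L (\<lambda>x. if x = u then 1 else 0) w)"
    for w u
  define res where "res v x = (if x \<in> V then v x else 0)" for v :: "'a \<Rightarrow> real" and x
  have row: "(\<Sum>u\<in>V. K w u * v u) = (if w = z then res v z else L (res v) w)" if "w \<in> V" for w v
  proof (cases "w = z")
    case True
    then show ?thesis
      using assms(1) finite_V by (simp add: K_def res_def if_distrib[of "\<lambda>x. x * _"] cong: if_cong)
  next
    case False
    have "L (res v) w = L v w" using that by (intro outflow_cong) (simp add: res_def)
    then show ?thesis using False that by (simp add: K_def outflow_eq_sum_unit mult.commute)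
  qed
  have "\<exists>v. \<forall>w\<in>V. (\<Sum>u\<in>V. K w u * v u) = (if w = z then 0 else if w = y then 1 else 0)"
  proof (rule square_system_solvable[OF finite_V finite_V refl])
    fix v assume kernel: "\<forall>w\<in>V. (\<Sum>u\<in>V. K w u * v u) = 0"
    have "res v z = 0" using kernel[rule_format, OF assms(1)] row[OF assms(1)] by simp
    moreover have "L (res v) w = 0" if "w \<in> V - {z}" for w using kernel row[of w v] that by auto
    ultimately have "res v u = 0" if "u \<in> V" for u using grounded_harmonic_eq_0[OF assms(1)] that by blast
    then show "\<forall>u\<in>V. v u = 0" by (simp add: res_def)
  qed
  then obtain v where v: "\<forall>w\<in>V. (\<Sum>u\<in>V. K w u * v u) = (if w = z then 0 else if w = y then 1 else 0)" ..
  have "is_voltage V E ends len z y (res v)"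
  proof (rule is_voltageI_off_ground[OF assms])
    show "res v z = 0" using v[rule_format, OF assms(1)] row[OF assms(1)] by simp
    show "res v w = 0" if "w \<notin> V" for w using that by (simp add: res_def)
    show "L (res v) w = (if w = y then 1 else 0)" if "w \<in> V - {z}" for w using v row[of w v] that by auto
  qed
  then show ?thesis by blast
qed

lemma jv_eq_voltage:
  assumes "z \<in> V" "is_voltage V E ends len z y v"
  shows "jv V E ends len z x y = v x"
proof -
  have "(THE v. is_voltage V E ends len z y v) = v"
    using assms voltage_unique by (intro the_equality) blast+
  then show ?thesis by (simp add: jv_def)
qed

lemma is_voltage_jv:
  assumes "z \<in> V" "y \<in> V"
  shows "is_voltage V E ends len z y (\<lambda>x. jv V E ends len z x y)"
proof -
  obtain v where "is_voltage V E ends len z y v" using voltage_exists[OF assms] ..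
  moreover from this have "(\<lambda>x. jv V E ends len z x y) = v" using jv_eq_voltage assms(1) by blast
  ultimately show ?thesis by simp
qed

lemma sum_mult_outflow_voltage:
  assumes "is_voltage V E ends len z y v" "z \<in> V" "y \<in> V"
  shows "(\<Sum>w\<in>V. u w * L v w) = u y - u z"
proof -
  have "(\<Sum>w\<in>V. u w * L v w) = (\<Sum>w\<in>V. (if w = y then u w else 0) - (if w = z then u w else 0))"
    using assms(1) by (intro sum.cong) (auto simp: is_voltage_def)
  also have "\<dots> = u y - u z" using assms finite_V by (simp add: sum_subtractf)
  finally show ?thesis .
qed

lemma reciprocity:
  assumes "is_voltage V E ends len z y f" "z \<in> V" "y \<in> V"
    and "is_voltage V E ends len z' y' g" "z' \<in> V" "y' \<in> V"
  shows "f y' - f z' = g y - g z"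
proof -
  have "f y' - f z' = (\<Sum>w\<in>V. f w * L g w)" using sum_mult_outflow_voltage assms by simp
  also have "\<dots> = (\<Sum>w\<in>V. g w * L f w)" unfolding green_identity by (simp add: mult.commute)
  also have "\<dots> = g y - g z" using sum_mult_outflow_voltage assms by simp
  finally show ?thesis .
qed

lemma jv_commute:
  assumes "x \<in> V" "y \<in> V" "z \<in> V"
  shows "jv V E ends len z x y = jv V E ends len z y x"
proof -
  have "jv V E ends len z z w = 0" if "w \<in> V" for w
    using is_voltage_jv[OF assms(3) that] by (simp add: is_voltage_def)
  then show ?thesis
    using reciprocity[OF is_voltage_jv[of z y] _ _ is_voltage_jv[of z x]] assms by simp
qed

lemma eff_res_pos:
  assumes "p \<in> V" "q \<in> V" "p \<noteq> q"
  shows "eff_res V E ends len p q > 0"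
proof -
  define \<psi> where "\<psi> x = jv V E ends len p x q" for x
  have \<psi>: "is_voltage V E ends len p q \<psi>" unfolding \<psi>_def using is_voltage_jv assms by blast
  have energy: "(\<Sum>w\<in>V. \<psi> w * L \<psi> w) = eff_res V E ends len p q"
    using sum_mult_outflow_voltage[OF \<psi> assms(1,2)] \<psi> by (simp add: eff_res_def \<psi>_def is_voltage_def)
  have "eff_res V E ends len p q \<noteq> 0"
  proof
    assume "eff_res V E ends len p q = 0"
    then have "L \<psi> q = L (\<lambda>_. \<psi> p) q"
      using energy energy_eq_0_imp_constant assms(1,2) by (intro outflow_cong) auto
    moreover have "L \<psi> q = 1" using \<psi> assms by (simp add: is_voltage_def)
    ultimately show False by (simp add: outflow_const)
  qed
  then show ?thesis using energy_nonneg[of \<psi>] energy by simp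
qed

lemma eff_res_glue_eq:
  assumes "p \<in> V" "q \<in> V" "s \<in> V" "t \<in> V" "p \<noteq> q" "u p = u q"
    and "\<And>w. w \<in> V \<Longrightarrow> L u w = (if w = t then 1 else 0) - (if w = s then 1 else 0)
                                + c * ((if w = p then 1 else 0) - (if w = q then 1 else 0))"
  shows "eff_res (glue_V V p q) E (glue_ends ends p q) len (ident p q s) (ident p q t) = u t - u s"
proof -
  interpret shorted: resistor_network "glue_V V p q" E "glue_ends ends p q" len
    using metrized_graph_glue[OF metrized_graph] by unfold_locales
  define g where "g w = (if w \<in> glue_V V p q then u w - u s else 0)" for w
  have u_ident: "u (ident p q x) = u x" for x using assms(6) by (simp add: ident_def)
  have outflow_g: "L (g \<circ> ident p q) w = L u w" if "w \<in> V" for w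
  proof -
    have "L (g \<circ> ident p q) w = L (\<lambda>x. u x - u s) w"
      using that by (intro outflow_cong) (auto simp: g_def u_ident ident_in_glue_V)
    then show ?thesis by (simp add: outflow_diff_const)
  qed
  have "is_voltage (glue_V V p q) E (glue_ends ends p q) len (ident p q s) (ident p q t) g"
    unfolding is_voltage_def
  proof (intro conjI allI impI ballI)
    fix w assume w: "w \<in> glue_V V p q"
    show "outflow E (glue_ends ends p q) len g w
        = (if w = ident p q t then 1 else 0) - (if w = ident p q s then 1 else 0)"
    proof (cases "w = p")
      case True
      have "outflow E (glue_ends ends p q) len g p = L u p + L u q"
        unfolding outflow_glue_ends_at[OF assms(5)] outflow_g[OF assms(1)] outflow_g[OF assms(2)] ..
      then show ?thesis
        using True assms(5) assms(7)[OF assms(1)] assms(7)[OF assms(2)] by (auto simp: ident_def)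
    next
      case False
      have "w \<noteq> q" "w \<in> V" using w False assms(5) by (auto simp: glue_V_def ident_def)
      then have "outflow E (glue_ends ends p q) len g w = L u w"
        unfolding outflow_glue_ends_off[OF False \<open>w \<noteq> q\<close>] using outflow_g by blast
      then show ?thesis
        using False \<open>w \<noteq> q\<close> assms(7)[OF \<open>w \<in> V\<close>] by (auto simp: ident_def)
    qed
  qed (use assms(3) ident_in_glue_V in \<open>auto simp: g_def u_ident\<close>)
  then have "eff_res (glue_V V p q) E (glue_ends ends p q) len (ident p q s) (ident p q t) = g (ident p q t)"
    unfolding eff_res_def using assms(3) by (intro shorted.jv_eq_voltage ident_in_glue_V)
  then show ?thesis using assms(4) by (simp add: g_def u_ident ident_in_glue_V)
qed

lemma eff_res_shorting:
  assumes "p \<in> V" "q \<in> V" "s \<in> V" "t \<in> V" "p \<noteq> q"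
  shows "eff_res V E ends len s t
       = eff_res (glue_V V p q) E (glue_ends ends p q) len (ident p q s) (ident p q t)
         + (jv V E ends len p q s - jv V E ends len p q t)\<^sup>2 / eff_res V E ends len p q"
proof -
  define \<phi> where "\<phi> x = jv V E ends len s x t" for x
  define \<psi> where "\<psi> x = jv V E ends len p x q" for x
  have \<phi>: "is_voltage V E ends len s t \<phi>" and \<psi>: "is_voltage V E ends len p q \<psi>"
    unfolding \<phi>_def \<psi>_def using is_voltage_jv assms by blast+
  define r where "r = eff_res V E ends len p q"
  have "r > 0" using eff_res_pos assms by (simp add: r_def)
  have r: "r = \<psi> q" by (simp add: r_def eff_res_def \<psi>_def)
  define c where "c = (\<phi> q - \<phi> p) / r"
  define u where "u x = \<phi> x - c * \<psi> x" for x
  have shorted: "eff_res (glue_V V p q) E (glue_ends ends p q) len (ident p q s) (ident p q t) = u t - u s"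
  proof (rule eff_res_glue_eq[OF assms])
    show "u p = u q" using \<psi> \<open>r > 0\<close> by (simp add: u_def c_def r is_voltage_def)
    show "L u w = (if w = t then 1 else 0) - (if w = s then 1 else 0)
                  + c * ((if w = p then 1 else 0) - (if w = q then 1 else 0))" if "w \<in> V" for w
      using \<phi> \<psi> that unfolding u_def outflow_diff by (simp add: is_voltage_def)
  qed
  have "\<phi> q - \<phi> p = \<psi> t - \<psi> s" using reciprocity[OF \<phi> _ _ \<psi>] assms by simp
  then have c: "c = (\<psi> t - \<psi> s) / r" by (simp add: c_def)
  have "\<phi> s = 0" using \<phi> by (simp add: is_voltage_def)
  then have "\<phi> t = (u t - u s) + (\<psi> s - \<psi> t)\<^sup>2 / r"
    using \<open>r > 0\<close> unfolding u_def c by (simp add: field_simps power2_eq_square)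
  moreover have "jv V E ends len p q x = \<psi> x" if "x \<in> V" for x
    using jv_commute assms(1,2) that by (simp add: \<psi>_def)
  ultimately show ?thesis
    using shorted assms(3,4) by (simp add: eff_res_def \<phi>_def r_def)
qed

end

theorem theorem2p3:
  fixes V :: "'a set" and E :: "'e set" and ends :: "'e \<Rightarrow> 'a \<times> 'a"
    and len :: "'e \<Rightarrow> real" and p q s t :: 'a
  assumes "metrized_graph V E ends len"
    and "p \<in> V" "q \<in> V" "s \<in> V" "t \<in> V" "p \<noteq> q"
  shows "eff_res V E ends len s t =
           eff_res (glue_V V p q) E (glue_ends ends p q) len (ident p q s) (ident p q t)
           + (1 / eff_res V E ends len p q) * (jv V E ends len p q s - jv V E ends len p q t)\<^sup>2
         \<and> eff_res V E ends len s t \<ge>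
           eff_res (glue_V V p q) E (glue_ends ends p q) len (ident p q s) (ident p q t)
         \<and> (eff_res V E ends len s t =
              eff_res (glue_V V p q) E (glue_ends ends p q) len (ident p q s) (ident p q t)
            \<longleftrightarrow> jv V E ends len p q s = jv V E ends len p q t)"
proof -
  interpret resistor_network V E ends len by unfold_locales (fact assms(1))
  have "eff_res V E ends len p q > 0" using eff_res_pos assms(2,3,6) .
  then show ?thesis using eff_res_shorting[OF assms(2-6)] by simp
qed

end
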